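(* Let $(X,\mathrm{dist})$ be a metric space, let $d\in\mathbb{N}$ and $\eta>0$. Suppose $\{f_i\}_{i\in I}$ is a partition of unity for $X$ such that (1) for any subset $F\subseteq I$ of cardinality greater than $d+1$, $\prod_{i\in F}f_i=0$; and (2) each $f_i$ is Lipschitz with constant $\eta$. Then for any $r\in\big[0,\frac{1}{\eta(d+1)}\big)$ there is a partition of unity $\{g_i\}_{i\in I}$ for $X$ such that (3) for any $i\in I$, $N_r(\mathrm{supp}(g_i))\subseteq\mathrm{supp}(f_i)^{o}$; and (4) each $g_i$ is Lipschitz with constant $\dfrac{(d+2)\eta}{(1-(d+1)\eta r)^2}$.
   Context: A partition of unity for $X$ is a family of continuous functions $f_i\colon X\to[0,\infty)$ whose supports are contained in a locally finite family of open sets and with $\sum_i f_i(x)=1$ for all $x\in X$. $\mathrm{supp}$ is the closed support, $S^{o}$ the interior of $S$, and $N_r(S)=\{x\in X:\mathrm{dist}(x,S)<r\}$. *)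

theory Defs
  imports "HOL-Analysis.Analysis"
begin

definition csupp :: "('a::topological_space \<Rightarrow> real) \<Rightarrow> 'a set" where
  "csupp g = closure {x. g x \<noteq> 0}"

text \<open>Open r-neighbourhood N_r(S) = {x. dist(x,S) < r}; written without infdist so that
  N_r of the empty set is empty (dist(x, empty) = infinity).\<close>
definition nbhd :: "real \<Rightarrow> 'a::metric_space set \<Rightarrow> 'a set" where
  "nbhd r S = {x. \<exists>y\<in>S. dist x y < r}"

definition locally_finite_family :: "'i set \<Rightarrow> ('i \<Rightarrow> 'a::topological_space set) \<Rightarrow> bool" where
  "locally_finite_family I U \<longleftrightarrow>
     (\<forall>x. \<exists>V. open V \<and> x \<in> V \<and> finite {i\<in>I. U i \<inter> V \<noteq> {}})"

definition partition_of_unity :: "'i set \<Rightarrow> ('i \<Rightarrow> 'a::topological_space \<Rightarrow> real) \<Rightarrow> bool" where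
  "partition_of_unity I f \<longleftrightarrow>
     (\<forall>i\<in>I. continuous_on UNIV (f i) \<and> (\<forall>x. 0 \<le> f i x)) \<and>
     (\<exists>U. (\<forall>i\<in>I. open (U i) \<and> csupp (f i) \<subseteq> U i) \<and> locally_finite_family I U) \<and>
     (\<forall>x. finite {i\<in>I. f i x \<noteq> 0} \<and> (\<Sum>i\<in>{i\<in>I. f i x \<noteq> 0}. f i x) = 1)"

end

theory Submission
  imports Defs
begin

text \<open>Lower each \<open>f i\<close> by \<open>\<eta> r\<close>, cut off at zero, and renormalise.  At most \<open>d + 1\<close> of the
  \<open>f i\<close> are positive at any point and they sum to one, so the truncated functions still sum
  to at least \<open>1 - (d + 1) \<eta> r > 0\<close>.  Where \<open>g i\<close> is nonzero we have \<open>f i > \<eta> r\<close>, so by the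
  Lipschitz bound \<open>f i > 0\<close> on the whole \<open>r\<close>-neighbourhood.  The same observation shows that
  for two points closer than \<open>r\<close> only indices active at both points contribute to the
  normalising sum, which makes that sum \<open>(d + 1) \<eta>\<close>-Lipschitz.  Hence the quotients are even
  \<open>(d + 2) \<eta> / (1 - (d + 1) \<eta> r)\<close>-Lipschitz.\<close>

lemma card_le_if_prod_eq_0:
  fixes a :: "'i \<Rightarrow> 'b::semidom"
  assumes "finite A" and "\<And>i. i \<in> A \<Longrightarrow> a i \<noteq> 0"
    and "\<And>F. F \<subseteq> A \<Longrightarrow> card F > n \<Longrightarrow> prod a F = 0"
  shows "card A \<le> n"
  using assms prod_zero_iff[of A a] by (meson linorder_not_le order_refl)

lemma lipschitz_on_max_0_diff:
  fixes f :: "'a::metric_space \<Rightarrow> real"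
  assumes "C-lipschitz_on U f"
  shows "C-lipschitz_on U (\<lambda>x. max 0 (f x - t))"
proof (rule lipschitz_onI)
  fix x y assume "x \<in> U" "y \<in> U"
  then have "\<bar>f x - f y\<bar> \<le> C * dist x y"
    using lipschitz_onD[OF assms] by (simp add: dist_real_def)
  then show "dist (max 0 (f x - t)) (max 0 (f y - t)) \<le> C * dist x y"
    using abs_ge_zero[of "f x - f y"] by (auto simp: dist_real_def max_def abs_if)
qed (rule lipschitz_on_nonneg[OF assms])

lemma sum_max_0_diff_ge:
  fixes a :: "'i \<Rightarrow> real"
  assumes "finite A" and "card A \<le> n" and "sum a A = 1" and "0 \<le> t"
  shows "1 - n * t \<le> (\<Sum>i\<in>A. max 0 (a i - t))"
proof -
  have "1 - n * t \<le> 1 - card A * t"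
    using assms(2,4) by (simp add: mult_right_mono)
  also have "\<dots> = (\<Sum>i\<in>A. a i - t)"
    using assms(3) by (simp add: sum_subtractf)
  also have "\<dots> \<le> (\<Sum>i\<in>A. max 0 (a i - t))"
    by (rule sum_mono) simp
  finally show ?thesis .
qed

lemma lipschitz_on_divide_dominating:
  fixes h s :: "'a::metric_space \<Rightarrow> real"
  assumes h: "a-lipschitz_on U h" and s: "b-lipschitz_on U s"
    and h_bounds: "\<And>x. x \<in> U \<Longrightarrow> 0 \<le> h x \<and> h x \<le> s x"
    and "0 < m" and s_ge: "\<And>x. x \<in> U \<Longrightarrow> m \<le> s x"
  shows "((a + b) / m)-lipschitz_on U (\<lambda>x. h x / s x)"
proof (rule lipschitz_onI)
  have "0 \<le> a" "0 \<le> b"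
    using h s by (auto intro: lipschitz_on_nonneg)
  then show "0 \<le> (a + b) / m"
    using \<open>0 < m\<close> by simp
  fix x y assume "x \<in> U" "y \<in> U"
  have pos: "0 < s x" "0 < s y"
    using s_ge \<open>x \<in> U\<close> \<open>y \<in> U\<close> \<open>0 < m\<close> by (auto intro: less_le_trans)
  have ratio: "\<bar>h y / s y\<bar> \<le> 1"
    using h_bounds[OF \<open>y \<in> U\<close>] pos by simp
  have "h x / s x - h y / s y = (h x - h y) / s x + (h y / s y) * ((s y - s x) / s x)"
    using pos by (simp add: field_simps)
  then have "\<bar>h x / s x - h y / s y\<bar> \<le> \<bar>h x - h y\<bar> / s x + \<bar>h y / s y\<bar> * (\<bar>s y - s x\<bar> / s x)"
    using pos by (simp add: abs_mult abs_triangle_ineq[THEN order_trans])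
  also have "\<dots> \<le> a * dist x y / s x + 1 * (b * dist x y / s x)"
  proof (intro add_mono mult_mono divide_right_mono)
    show "\<bar>h x - h y\<bar> \<le> a * dist x y"
      using lipschitz_onD[OF h \<open>x \<in> U\<close> \<open>y \<in> U\<close>] by (simp add: dist_real_def)
    show "\<bar>s y - s x\<bar> \<le> b * dist x y"
      using lipschitz_onD[OF s \<open>x \<in> U\<close> \<open>y \<in> U\<close>] by (simp add: dist_real_def abs_minus_commute)
  qed (use ratio pos in auto)
  also have "\<dots> = (a + b) * dist x y / s x"
    by (simp add: add_divide_distrib distrib_right)
  also have "\<dots> \<le> (a + b) * dist x y / m"
    using s_ge[OF \<open>x \<in> U\<close>] \<open>0 < m\<close> \<open>0 \<le> a\<close> \<open>0 \<le> b\<close> by (intro divide_left_mono) auto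
  finally show "dist (h x / s x) (h y / s y) \<le> (a + b) / m * dist x y"
    by (simp add: dist_real_def)
qed

lemma partition_of_unity_subordinate:
  assumes f: "partition_of_unity I f"
    and cont: "\<And>i. i \<in> I \<Longrightarrow> continuous_on UNIV (g i)"
    and nonneg: "\<And>i x. i \<in> I \<Longrightarrow> 0 \<le> g i x"
    and subordinate: "\<And>i x. i \<in> I \<Longrightarrow> g i x \<noteq> 0 \<Longrightarrow> f i x \<noteq> 0"
    and sum_eq_1: "\<And>x. (\<Sum>i\<in>{i\<in>I. f i x \<noteq> 0}. g i x) = 1"
  shows "partition_of_unity I g"
  unfolding partition_of_unity_def
proof (intro conjI ballI allI)
  obtain U where U: "\<forall>i\<in>I. open (U i) \<and> csupp (f i) \<subseteq> U i" "locally_finite_family I U"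
    using f unfolding partition_of_unity_def by auto
  have "csupp (g i) \<subseteq> csupp (f i)" if "i \<in> I" for i
    unfolding csupp_def using subordinate[OF that] by (intro closure_mono) auto
  with U show "\<exists>U. (\<forall>i\<in>I. open (U i) \<and> csupp (g i) \<subseteq> U i) \<and> locally_finite_family I U"
    by blast
  fix x
  have finite: "finite {i\<in>I. f i x \<noteq> 0}"
    using f unfolding partition_of_unity_def by blast
  have sub: "{i\<in>I. g i x \<noteq> 0} \<subseteq> {i\<in>I. f i x \<noteq> 0}"
    using subordinate by blast
  show "finite {i\<in>I. g i x \<noteq> 0}"
    using finite_subset[OF sub finite] .
  have "(\<Sum>i\<in>{i\<in>I. g i x \<noteq> 0}. g i x) = (\<Sum>i\<in>{i\<in>I. f i x \<noteq> 0}. g i x)"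
    by (rule sum.mono_neutral_left[OF finite sub]) auto
  then show "(\<Sum>i\<in>{i\<in>I. g i x \<noteq> 0}. g i x) = 1"
    using sum_eq_1 by simp
qed (use cont nonneg in auto)

lemma nonzero_subset_interior_csupp:
  fixes g :: "'a::topological_space \<Rightarrow> real"
  assumes "continuous_on UNIV g"
  shows "{x. g x \<noteq> 0} \<subseteq> interior (csupp g)"
  unfolding csupp_def
  by (intro interior_maximal closure_subset open_Collect_neq assms continuous_on_const)

lemma nbhd_superlevel_subset:
  fixes f :: "'a::metric_space \<Rightarrow> real"
  assumes "\<eta>-lipschitz_on UNIV f" and "0 < \<eta>"
  shows "nbhd r {x. t \<le> f x} \<subseteq> {x. t - \<eta> * r < f x}"
proof
  fix x assume "x \<in> nbhd r {x. t \<le> f x}"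
  then obtain y where "t \<le> f y" "dist x y < r"
    unfolding nbhd_def by auto
  moreover have "\<bar>f x - f y\<bar> \<le> \<eta> * dist x y"
    using lipschitz_onD[OF assms(1)] by (simp add: dist_real_def)
  moreover have "\<eta> * dist x y < \<eta> * r"
    using \<open>dist x y < r\<close> \<open>0 < \<eta>\<close> by simp
  ultimately show "x \<in> {x. t - \<eta> * r < f x}"
    by auto
qed

locale lipschitz_pou_bounded_multiplicity =
  fixes I :: "'i set" and f :: "'i \<Rightarrow> 'a::metric_space \<Rightarrow> real" and n :: nat and \<eta> :: real
  assumes partition: "partition_of_unity I f"
    and multiplicity: "\<And>x. card {i\<in>I. f i x \<noteq> 0} \<le> n"
    and lipschitz: "\<And>i. i \<in> I \<Longrightarrow> \<eta>-lipschitz_on UNIV (f i)"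
    and eta_pos: "0 < \<eta>"
begin

definition active :: "'a \<Rightarrow> 'i set" where
  "active x = {i\<in>I. f i x \<noteq> 0}"

definition trunc :: "real \<Rightarrow> 'i \<Rightarrow> 'a \<Rightarrow> real" where
  "trunc r i x = max 0 (f i x - \<eta> * r)"

definition trunc_sum :: "real \<Rightarrow> 'a \<Rightarrow> real" where
  "trunc_sum r x = (\<Sum>i\<in>active x. trunc r i x)"

definition shrink :: "real \<Rightarrow> 'i \<Rightarrow> 'a \<Rightarrow> real" where
  "shrink r i x = trunc r i x / trunc_sum r x"

lemma finite_active: "finite (active x)"
  and sum_active: "(\<Sum>i\<in>active x. f i x) = 1"
  and f_nonneg: "i \<in> I \<Longrightarrow> 0 \<le> f i x"
  using partition unfolding partition_of_unity_def active_def by auto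

lemma card_active: "card (active x) \<le> n"
  unfolding active_def by (rule multiplicity)

lemma abs_diff_le: "i \<in> I \<Longrightarrow> \<bar>f i x - f i y\<bar> \<le> \<eta> * dist x y"
  using lipschitz_onD[OF lipschitz] by (simp add: dist_real_def)

lemma trunc_nonneg: "0 \<le> trunc r i x"
  by (simp add: trunc_def)

lemma lipschitz_trunc: "i \<in> I \<Longrightarrow> \<eta>-lipschitz_on UNIV (trunc r i)"
  unfolding trunc_def by (intro lipschitz_on_max_0_diff lipschitz)

lemma trunc_le_trunc_sum:
  assumes "i \<in> I" and "0 \<le> r"
  shows "trunc r i x \<le> trunc_sum r x"
proof (cases "i \<in> active x")
  case True
  then show ?thesis
    unfolding trunc_sum_def by (intro member_le_sum finite_active trunc_nonneg)
next
  case False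
  then have "trunc r i x = 0"
    using assms eta_pos unfolding active_def trunc_def by auto
  then show ?thesis
    unfolding trunc_sum_def by (simp add: sum_nonneg trunc_nonneg)
qed

lemma trunc_sum_le_1:
  assumes "0 \<le> r"
  shows "trunc_sum r x \<le> 1"
proof -
  have "trunc_sum r x \<le> (\<Sum>i\<in>active x. f i x)"
    unfolding trunc_sum_def trunc_def using assms eta_pos f_nonneg
    by (intro sum_mono) (auto simp: active_def)
  then show ?thesis
    by (simp add: sum_active)
qed

lemma trunc_sum_ge:
  assumes "0 \<le> r"
  shows "1 - n * \<eta> * r \<le> trunc_sum r x"
  using sum_max_0_diff_ge[OF finite_active card_active sum_active, of "\<eta> * r"] assms eta_pos
  unfolding trunc_sum_def trunc_def by (simp add: mult.assoc)

text \<open>An index active at \<open>x\<close> but not at a point closer than \<open>r\<close> has \<open>f i x < \<eta> r\<close>, so its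
  truncation vanishes at \<open>x\<close>.\<close>
lemma trunc_sum_eq_sum_common:
  assumes "dist x y < r"
  shows "trunc_sum r x = (\<Sum>i\<in>active x \<inter> active y. trunc r i x)"
  unfolding trunc_sum_def
proof (rule sum.mono_neutral_right[OF finite_active], blast, intro ballI)
  fix i assume "i \<in> active x - active x \<inter> active y"
  then have "i \<in> I" "f i y = 0"
    unfolding active_def by auto
  moreover have "\<eta> * dist x y < \<eta> * r"
    using assms eta_pos by simp
  ultimately show "trunc r i x = 0"
    using abs_diff_le[of i x y] unfolding trunc_def by auto
qed

lemma lipschitz_trunc_sum:
  assumes "0 \<le> r"
  shows "(n * \<eta>)-lipschitz_on UNIV (trunc_sum r)"
proof (rule lipschitz_onI)
  fix x y :: 'a
  show "dist (trunc_sum r x) (trunc_sum r y) \<le> n * \<eta> * dist x y"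
  proof (cases "dist x y < r")
    case True
    let ?C = "active x \<inter> active y"
    have "card ?C \<le> n"
      using card_mono[OF finite_active, of ?C x] card_active[of x] by auto
    have "\<bar>trunc_sum r x - trunc_sum r y\<bar> = \<bar>\<Sum>i\<in>?C. trunc r i x - trunc r i y\<bar>"
      using trunc_sum_eq_sum_common[OF True] trunc_sum_eq_sum_common[of y x r] True
      by (simp add: dist_commute Int_commute sum_subtractf)
    also have "\<dots> \<le> (\<Sum>i\<in>?C. \<bar>trunc r i x - trunc r i y\<bar>)"
      by (rule sum_abs)
    also have "\<dots> \<le> (\<Sum>i\<in>?C. \<eta> * dist x y)"
      using lipschitz_onD[OF lipschitz_trunc] by (intro sum_mono) (auto simp: active_def dist_real_def)
    also have "\<dots> \<le> n * \<eta> * dist x y"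
      using \<open>card ?C \<le> n\<close> eta_pos by (simp add: mult_right_mono)
    finally show ?thesis
      by (simp add: dist_real_def)
  next
    case False
    have "\<bar>trunc_sum r x - trunc_sum r y\<bar> \<le> n * \<eta> * r"
      using trunc_sum_ge[OF assms, of x] trunc_sum_ge[OF assms, of y]
        trunc_sum_le_1[OF assms, of x] trunc_sum_le_1[OF assms, of y] by linarith
    also have "\<dots> \<le> n * \<eta> * dist x y"
      using False eta_pos by (intro mult_left_mono) auto
    finally show ?thesis
      by (simp add: dist_real_def)
  qed
qed (use eta_pos in simp)

context
  fixes r :: real
  assumes r_nonneg: "0 \<le> r" and r_small: "n * \<eta> * r < 1"
begin

lemma trunc_sum_pos: "0 < trunc_sum r x"
  using trunc_sum_ge[OF r_nonneg, of x] r_small by linarith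

lemma lipschitz_shrink:
  assumes "i \<in> I"
  shows "((n + 1) * \<eta> / (1 - n * \<eta> * r))-lipschitz_on UNIV (shrink r i)"
proof -
  have "((\<eta> + n * \<eta>) / (1 - n * \<eta> * r))-lipschitz_on UNIV (\<lambda>x. trunc r i x / trunc_sum r x)"
    using lipschitz_trunc[OF assms] lipschitz_trunc_sum[OF r_nonneg] trunc_nonneg
      trunc_le_trunc_sum[OF assms r_nonneg] r_small trunc_sum_ge[OF r_nonneg]
    by (intro lipschitz_on_divide_dominating) auto
  then show ?thesis
    unfolding shrink_def by (simp add: algebra_simps)
qed

lemma partition_of_unity_shrink: "partition_of_unity I (shrink r)"
proof (rule partition_of_unity_subordinate[OF partition])
  show "continuous_on UNIV (shrink r i)" if "i \<in> I" for i
    using lipschitz_shrink[OF that] by (rule lipschitz_on_continuous_on)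
  show "0 \<le> shrink r i x" for i x
    unfolding shrink_def using trunc_nonneg trunc_sum_pos by (simp add: less_imp_le)
  show "f i x \<noteq> 0" if "shrink r i x \<noteq> 0" for i x
    using that r_nonneg eta_pos unfolding shrink_def trunc_def by auto
  show "(\<Sum>i\<in>{i\<in>I. f i x \<noteq> 0}. shrink r i x) = 1" for x
    using trunc_sum_pos[of x]
    unfolding shrink_def sum_divide_distrib[symmetric] by (simp add: trunc_sum_def active_def)
qed

end

lemma nbhd_csupp_shrink:
  assumes "i \<in> I"
  shows "nbhd r (csupp (shrink r i)) \<subseteq> interior (csupp (f i))"
proof -
  have cont: "continuous_on UNIV (f i)"
    using partition assms unfolding partition_of_unity_def by blast
  have "csupp (shrink r i) \<subseteq> {x. \<eta> * r \<le> f i x}"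
    unfolding csupp_def
  proof (rule closure_minimal)
    show "{x. shrink r i x \<noteq> 0} \<subseteq> {x. \<eta> * r \<le> f i x}"
      unfolding shrink_def trunc_def by auto
    show "closed {x. \<eta> * r \<le> f i x}"
      by (intro closed_Collect_le continuous_on_const cont)
  qed
  then have "nbhd r (csupp (shrink r i)) \<subseteq> {x. 0 < f i x}"
    using nbhd_superlevel_subset[OF lipschitz[OF assms] eta_pos, of r "\<eta> * r"]
    unfolding nbhd_def by auto
  also have "\<dots> \<subseteq> interior (csupp (f i))"
    using nonzero_subset_interior_csupp[OF cont] by auto
  finally show ?thesis .
qed

end

theorem lemma4p5:
  fixes f :: "'i \<Rightarrow> 'a::metric_space \<Rightarrow> real" and I :: "'i set"
    and d :: nat and \<eta> r :: real
  assumes "\<eta> > 0"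
    and "partition_of_unity I f"
    and "\<And>F x. F \<subseteq> I \<Longrightarrow> finite F \<Longrightarrow> card F > d + 1 \<Longrightarrow> (\<Prod>i\<in>F. f i x) = 0"
    and "\<And>i. i \<in> I \<Longrightarrow> \<eta>-lipschitz_on UNIV (f i)"
    and "0 \<le> r" and "r < 1 / (\<eta> * (real d + 1))"
  shows "\<exists>g :: 'i \<Rightarrow> 'a \<Rightarrow> real. partition_of_unity I g \<and>
           (\<forall>i\<in>I. nbhd r (csupp (g i)) \<subseteq> interior (csupp (f i))) \<and>
           (\<forall>i\<in>I. ((real d + 2) * \<eta> / (1 - (real d + 1) * \<eta> * r)^2)-lipschitz_on UNIV (g i))"
proof -
  have "card {i\<in>I. f i x \<noteq> 0} \<le> d + 1" for x
  proof (rule card_le_if_prod_eq_0[where a = "\<lambda>i. f i x"])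
    show finite: "finite {i\<in>I. f i x \<noteq> 0}"
      using assms(2) unfolding partition_of_unity_def by blast
    show "(\<Prod>i\<in>F. f i x) = 0" if "F \<subseteq> {i\<in>I. f i x \<noteq> 0}" "d + 1 < card F" for F
      using assms(3) that finite_subset[OF that(1) finite] by blast
  qed simp
  then interpret lipschitz_pou_bounded_multiplicity I f "d + 1" \<eta>
    using assms(1,2,4) by unfold_locales auto
  define c where "c = (real d + 1) * \<eta> * r"
  have "r * (\<eta> * (real d + 1)) < 1"
    using assms(1,6) by (simp add: less_divide_eq)
  then have "0 \<le> c" "c < 1"
    using assms(1,5) by (simp_all add: c_def algebra_simps)
  have real_d: "real (d + 1) = real d + 1" "real (d + 1) + 1 = real d + 2"
    by simp_all
  have "((real d + 2) * \<eta> / (1 - c))-lipschitz_on UNIV (shrink r i)" if "i \<in> I" for i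
    using lipschitz_shrink[OF assms(5) _ that, unfolded real_d] \<open>c < 1\<close> by (simp add: c_def add.commute)
  moreover have "(real d + 2) * \<eta> / (1 - c) \<le> (real d + 2) * \<eta> / (1 - c)^2"
    using \<open>0 \<le> c\<close> \<open>c < 1\<close> assms(1)
    by (intro divide_left_mono) (auto simp: power2_eq_square mult_le_cancel_left1)
  ultimately show ?thesis
    using partition_of_unity_shrink[OF assms(5), unfolded real_d] \<open>c < 1\<close> nbhd_csupp_shrink
    by (intro exI[of _ "shrink r"]) (auto simp: c_def intro: lipschitz_on_le)
qed

end
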